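(* Let $c,d$ be comonoids in $(\mathbf{Poly},\mathcal{y},\triangleleft)$ and let $e$ be a comonad on $c$ in $\mathbb{C}\mathbf{at}^\sharp$, i.e. a $(c,c)$-bicomodule with bicomodule maps $e\to c$ and $e\to e\triangleleft_c e$ satisfying counit and coassociativity laws; then the carrier polynomial $e$ is itself a comonoid in $\mathbf{Poly}$ equipped with a comonoid homomorphism $e\to c$. Under these hypotheses there is an equivalence, preserving underlying carrier polynomials, between $(e,d)$-bicomodules and $(c,d)$-bicomodules equipped with the structure of a left $e$-comodule (a $(c,d)$-bicomodule map $p\to e\triangleleft_c p$ satisfying counit and coassociativity).
   Context: Polynomials $p=\sum_{I\in p(1)}\mathcal{y}^{p[I]}$ form $\mathbf{Poly}$ with composition product $\triangleleft$ and unit $\mathcal{y}$ (one position, one direction); comonoids in $(\mathbf{Poly},\mathcal{y},\triangleleft)$ are small categories and comonoid homomorphisms are cofunctors. For comonoids $c,d$, a $(c,d)$-bicomodule is a polynomial $p$ with compatible coassociative counital coactions $p\to c\triangleleft p$ and $p\to p\triangleleft d$. $\mathbb{C}\mathbf{at}^\sharp$ is the pseudo-double category with objects comonoids, vertical morphisms comonoid homomorphisms, horizontal morphisms bicomodules composed by $p\triangleleft_dq$ (equalizer of $p\triangleleft q\rightrightarrows p\triangleleft d\triangleleft q$), horizontal identity on $c$ the bicomodule $c$, and squares polynomial maps compatible with coactions. *)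

theory Defs
  imports "HOL-Library.FuncSet"
begin

text \<open>A polynomial p = sum over I in p(1) of y^(p[I]) is given by its set of positions p(1)
and, for each position I, its set of directions p[I].\<close>

type_synonym ('i,'a) poly = "'i set \<times> ('i \<Rightarrow> 'a set)"

definition pos :: "('i,'a) poly \<Rightarrow> 'i set" where "pos p = fst p"
definition dir :: "('i,'a) poly \<Rightarrow> 'i \<Rightarrow> 'a set" where "dir p = snd p"

text \<open>A map of polynomials p \<rightarrow> q: forward on positions, backward on directions.\<close>
type_synonym ('i,'a,'j,'b) pmap = "('i \<Rightarrow> 'j) \<times> ('i \<Rightarrow> 'b \<Rightarrow> 'a)"

definition is_map :: "('i,'a) poly \<Rightarrow> ('j,'b) poly \<Rightarrow> ('i,'a,'j,'b) pmap \<Rightarrow> bool" where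
  "is_map p q f \<longleftrightarrow> (\<forall>i\<in>pos p. fst f i \<in> pos q \<and> (\<forall>b\<in>dir q (fst f i). snd f i b \<in> dir p i))"

text \<open>Equality of two maps p \<rightarrow> q (only the data on the carriers matters).\<close>
definition meq :: "('i,'a) poly \<Rightarrow> ('j,'b) poly \<Rightarrow> ('i,'a,'j,'b) pmap \<Rightarrow> ('i,'a,'j,'b) pmap \<Rightarrow> bool" where
  "meq p q f g \<longleftrightarrow> (\<forall>i\<in>pos p. fst f i = fst g i \<and> (\<forall>b\<in>dir q (fst f i). snd f i b = snd g i b))"

definition mid :: "('i,'a,'i,'a) pmap" where "mid = ((\<lambda>i. i), (\<lambda>i a. a))"

definition mcomp :: "('j,'b,'k,'c) pmap \<Rightarrow> ('i,'a,'j,'b) pmap \<Rightarrow> ('i,'a,'k,'c) pmap" where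
  "mcomp g f = ((\<lambda>i. fst g (fst f i)), (\<lambda>i c. snd f i (snd g (fst f i) c)))"

definition ypoly :: "(unit,unit) poly" where "ypoly = ({()}, \<lambda>_. {()})"

text \<open>Composition product p \<triangleleft> q: positions are pairs (I, h) with h : p[I] \<rightarrow> q(1),
directions at (I,h) are pairs (a,b) with a \<in> p[I], b \<in> q[h a].\<close>
definition tri :: "('i,'a) poly \<Rightarrow> ('j,'b) poly \<Rightarrow> ('i \<times> ('a \<Rightarrow> 'j), 'a \<times> 'b) poly" where
  "tri p q = ({(i,h). i \<in> pos p \<and> h \<in> dir p i \<rightarrow>\<^sub>E pos q},
              (\<lambda>(i,h). {(a,b). a \<in> dir p i \<and> b \<in> dir q (h a)}))"

text \<open>Action of the composition product on maps: given f : p \<rightarrow> p' and g : q \<rightarrow> q',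
hc p' f g : p \<triangleleft> q \<rightarrow> p' \<triangleleft> q'.\<close>
definition hc :: "('j,'b) poly \<Rightarrow> ('i,'a,'j,'b) pmap \<Rightarrow> ('k,'c,'l,'d) pmap
    \<Rightarrow> ('i \<times> ('a \<Rightarrow> 'k), 'a \<times> 'c, 'j \<times> ('b \<Rightarrow> 'l), 'b \<times> 'd) pmap" where
  "hc p' f g = ((\<lambda>(i,h). (fst f i, \<lambda>a'\<in>dir p' (fst f i). fst g (h (snd f i a')))),
                (\<lambda>(i,h) (a',b'). (snd f i a', snd g (h (snd f i a')) b')))"

definition assoc :: "('i,'a) poly \<Rightarrow> ('j,'b) poly
    \<Rightarrow> (('i \<times> ('a \<Rightarrow> 'j)) \<times> ('a \<times> 'b \<Rightarrow> 'k), ('a \<times> 'b) \<times> 'c,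
        'i \<times> ('a \<Rightarrow> 'j \<times> ('b \<Rightarrow> 'k)), 'a \<times> ('b \<times> 'c)) pmap" where
  "assoc p q = ((\<lambda>((i,h),k). (i, \<lambda>a\<in>dir p i. (h a, \<lambda>b\<in>dir q (h a). k (a,b)))),
                (\<lambda>((i,h),k) (a,(b,c)). ((a,b),c)))"

definition lu :: "(unit \<times> (unit \<Rightarrow> 'i), unit \<times> 'a, 'i, 'a) pmap" where
  "lu = ((\<lambda>(u,h). h ()), (\<lambda>(u,h) a. ((),a)))"

definition ru :: "('i \<times> ('a \<Rightarrow> unit), 'a \<times> unit, 'i, 'a) pmap" where
  "ru = ((\<lambda>(i,h). i), (\<lambda>(i,h) a. (a,())))"

definition comonoid :: "('i,'a) poly \<Rightarrow> ('i,'a,unit,unit) pmap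
    \<Rightarrow> ('i,'a,'i \<times> ('a \<Rightarrow> 'i),'a \<times> 'a) pmap \<Rightarrow> bool" where
  "comonoid c eps del \<longleftrightarrow>
     is_map c ypoly eps \<and> is_map c (tri c c) del \<and>
     meq c c (mcomp lu (mcomp (hc ypoly eps mid) del)) mid \<and>
     meq c c (mcomp ru (mcomp (hc c mid eps) del)) mid \<and>
     meq c (tri c (tri c c)) (mcomp (assoc c c) (mcomp (hc (tri c c) del mid) del))
                             (mcomp (hc c mid del) del)"

definition comonoid_hom :: "('i,'a) poly \<Rightarrow> ('i,'a,unit,unit) pmap \<Rightarrow> ('i,'a,'i \<times> ('a \<Rightarrow> 'i),'a \<times> 'a) pmap
    \<Rightarrow> ('j,'b) poly \<Rightarrow> ('j,'b,unit,unit) pmap \<Rightarrow> ('j,'b,'j \<times> ('b \<Rightarrow> 'j),'b \<times> 'b) pmap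
    \<Rightarrow> ('i,'a,'j,'b) pmap \<Rightarrow> bool" where
  "comonoid_hom e epse dele c epsc delc phi \<longleftrightarrow>
     is_map e c phi \<and>
     meq e ypoly (mcomp epsc phi) epse \<and>
     meq e (tri c c) (mcomp delc phi) (mcomp (hc c phi phi) dele)"

definition left_comodule :: "('i,'a) poly \<Rightarrow> ('i,'a,unit,unit) pmap \<Rightarrow> ('i,'a,'i \<times> ('a \<Rightarrow> 'i),'a \<times> 'a) pmap
    \<Rightarrow> ('k,'m) poly \<Rightarrow> ('k,'m,'i \<times> ('a \<Rightarrow> 'k),'a \<times> 'm) pmap \<Rightarrow> bool" where
  "left_comodule c eps del p lam \<longleftrightarrow>
     is_map p (tri c p) lam \<and>
     meq p p (mcomp lu (mcomp (hc ypoly eps mid) lam)) mid \<and>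
     meq p (tri c (tri c p)) (mcomp (assoc c c) (mcomp (hc (tri c c) del mid) lam))
                             (mcomp (hc c mid lam) lam)"

definition right_comodule :: "('j,'b) poly \<Rightarrow> ('j,'b,unit,unit) pmap \<Rightarrow> ('j,'b,'j \<times> ('b \<Rightarrow> 'j),'b \<times> 'b) pmap
    \<Rightarrow> ('k,'m) poly \<Rightarrow> ('k,'m,'k \<times> ('m \<Rightarrow> 'j),'m \<times> 'b) pmap \<Rightarrow> bool" where
  "right_comodule d eps del p rho \<longleftrightarrow>
     is_map p (tri p d) rho \<and>
     meq p p (mcomp ru (mcomp (hc p mid eps) rho)) mid \<and>
     meq p (tri p (tri d d)) (mcomp (assoc p d) (mcomp (hc (tri p d) rho mid) rho))
                             (mcomp (hc p mid del) rho)"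

definition bicomodule :: "('i,'a) poly \<Rightarrow> ('i,'a,unit,unit) pmap \<Rightarrow> ('i,'a,'i \<times> ('a \<Rightarrow> 'i),'a \<times> 'a) pmap
    \<Rightarrow> ('j,'b) poly \<Rightarrow> ('j,'b,unit,unit) pmap \<Rightarrow> ('j,'b,'j \<times> ('b \<Rightarrow> 'j),'b \<times> 'b) pmap
    \<Rightarrow> ('k,'m) poly \<Rightarrow> ('k,'m,'i \<times> ('a \<Rightarrow> 'k),'a \<times> 'm) pmap \<Rightarrow> ('k,'m,'k \<times> ('m \<Rightarrow> 'j),'m \<times> 'b) pmap
    \<Rightarrow> bool" where
  "bicomodule c epsc delc d epsd deld p lam rho \<longleftrightarrow>
     left_comodule c epsc delc p lam \<and> right_comodule d epsd deld p rho \<and>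
     meq p (tri c (tri p d)) (mcomp (assoc c p) (mcomp (hc (tri c p) lam mid) rho))
                             (mcomp (hc c mid rho) lam)"

definition bicomodule_map :: "('i,'a) poly \<Rightarrow> ('j,'b) poly
    \<Rightarrow> ('k,'m) poly \<Rightarrow> ('k,'m,'i \<times> ('a \<Rightarrow> 'k),'a \<times> 'm) pmap \<Rightarrow> ('k,'m,'k \<times> ('m \<Rightarrow> 'j),'m \<times> 'b) pmap
    \<Rightarrow> ('n,'o) poly \<Rightarrow> ('n,'o,'i \<times> ('a \<Rightarrow> 'n),'a \<times> 'o) pmap \<Rightarrow> ('n,'o,'n \<times> ('o \<Rightarrow> 'j),'o \<times> 'b) pmap
    \<Rightarrow> ('k,'m,'n,'o) pmap \<Rightarrow> bool" where
  "bicomodule_map c d p lam rho q lam' rho' f \<longleftrightarrow>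
     is_map p q f \<and>
     meq p (tri c q) (mcomp (hc c mid f) lam) (mcomp lam' f) \<and>
     meq p (tri q d) (mcomp (hc q f mid) rho) (mcomp rho' f)"

text \<open>Maps into the horizontal composite p \<triangleleft>_c q (the equalizer of p \<triangleleft> q \<rightrightarrows> p \<triangleleft> c \<triangleleft> q)
are represented, via the universal property of the equalizer, by maps into p \<triangleleft> q equalizing
the two parallel maps.  Since the inclusions of these equalizers (and their \<triangleleft>-composites)
into the ordinary composites are monic, all equations between such maps are checked after
composing with these inclusions.\<close>

definition lands_in_hcomp :: "('x,'z) poly \<Rightarrow> ('i,'a) poly \<Rightarrow> ('r,'s) poly
    \<Rightarrow> ('r,'s,'r \<times> ('s \<Rightarrow> 'i),'s \<times> 'a) pmap \<Rightarrow> ('n,'o) poly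
    \<Rightarrow> ('n,'o,'i \<times> ('a \<Rightarrow> 'n),'a \<times> 'o) pmap
    \<Rightarrow> ('x,'z,'r \<times> ('s \<Rightarrow> 'n),'s \<times> 'o) pmap \<Rightarrow> bool" where
  "lands_in_hcomp x c r rho_r n lam_n f \<longleftrightarrow>
     meq x (tri r (tri c n)) (mcomp (assoc r c) (mcomp (hc (tri r c) rho_r mid) f))
                             (mcomp (hc r mid lam_n) f)"

definition comonad_on :: "('i,'a) poly \<Rightarrow> ('i,'a,unit,unit) pmap \<Rightarrow> ('i,'a,'i \<times> ('a \<Rightarrow> 'i),'a \<times> 'a) pmap
    \<Rightarrow> ('r,'s) poly \<Rightarrow> ('r,'s,'i \<times> ('a \<Rightarrow> 'r),'a \<times> 's) pmap \<Rightarrow> ('r,'s,'r \<times> ('s \<Rightarrow> 'i),'s \<times> 'a) pmap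
    \<Rightarrow> ('r,'s,'i,'a) pmap \<Rightarrow> ('r,'s,'r \<times> ('s \<Rightarrow> 'r),'s \<times> 's) pmap \<Rightarrow> bool" where
  "comonad_on c epsc delc e lam rho eps del \<longleftrightarrow>
     bicomodule c epsc delc c epsc delc e lam rho \<and>
     \<comment> \<open>the counit is a (c,c)-bicomodule map e \<rightarrow> c\<close>
     bicomodule_map c c e lam rho c delc delc eps \<and>
     \<comment> \<open>the comultiplication is a map e \<rightarrow> e \<triangleleft>_c e ...\<close>
     is_map e (tri e e) del \<and>
     lands_in_hcomp e c e rho e lam del \<and>
     \<comment> \<open>... which is a (c,c)-bicomodule map\<close>
     meq e (tri c (tri e e)) (mcomp (assoc c e) (mcomp (hc (tri c e) lam mid) del))
                             (mcomp (hc c mid del) lam) \<and>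
     meq e (tri e (tri e c)) (mcomp (assoc e e) (mcomp (hc (tri e e) del mid) rho))
                             (mcomp (hc e mid rho) del) \<and>
     \<comment> \<open>counit laws: e \<rightarrow> e \<triangleleft>_c e \<rightarrow> c \<triangleleft>_c e \<cong> e and e \<rightarrow> e \<triangleleft>_c e \<rightarrow> e \<triangleleft>_c c \<cong> e are the identity\<close>
     meq e (tri c e) (mcomp (hc c eps mid) del) lam \<and>
     meq e (tri e c) (mcomp (hc e mid eps) del) rho \<and>
     \<comment> \<open>coassociativity\<close>
     meq e (tri e (tri e e)) (mcomp (assoc e e) (mcomp (hc (tri e e) del mid) del))
                             (mcomp (hc e mid del) del)"

definition left_comonad_comodule :: "('i,'a) poly \<Rightarrow> ('j,'b) poly
    \<Rightarrow> ('r,'s) poly \<Rightarrow> ('r,'s,'i \<times> ('a \<Rightarrow> 'r),'a \<times> 's) pmap \<Rightarrow> ('r,'s,'r \<times> ('s \<Rightarrow> 'i),'s \<times> 'a) pmap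
    \<Rightarrow> ('r,'s,'i,'a) pmap \<Rightarrow> ('r,'s,'r \<times> ('s \<Rightarrow> 'r),'s \<times> 's) pmap
    \<Rightarrow> ('k,'m) poly \<Rightarrow> ('k,'m,'i \<times> ('a \<Rightarrow> 'k),'a \<times> 'm) pmap \<Rightarrow> ('k,'m,'k \<times> ('m \<Rightarrow> 'j),'m \<times> 'b) pmap
    \<Rightarrow> ('k,'m,'r \<times> ('s \<Rightarrow> 'k),'s \<times> 'm) pmap \<Rightarrow> bool" where
  "left_comonad_comodule c d e lame rhoe epse dele p lam rho alpha \<longleftrightarrow>
     is_map p (tri e p) alpha \<and>
     lands_in_hcomp p c e rhoe p lam alpha \<and>
     \<comment> \<open>(c,d)-bicomodule map p \<rightarrow> e \<triangleleft>_c p\<close>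
     meq p (tri c (tri e p)) (mcomp (assoc c e) (mcomp (hc (tri c e) lame mid) alpha))
                             (mcomp (hc c mid alpha) lam) \<and>
     meq p (tri e (tri p d)) (mcomp (assoc e p) (mcomp (hc (tri e p) alpha mid) rho))
                             (mcomp (hc e mid rho) alpha) \<and>
     \<comment> \<open>counit: p \<rightarrow> e \<triangleleft>_c p \<rightarrow> c \<triangleleft>_c p \<cong> p is the identity\<close>
     meq p (tri c p) (mcomp (hc c epse mid) alpha) lam \<and>
     \<comment> \<open>coassociativity\<close>
     meq p (tri e (tri e p)) (mcomp (assoc e e) (mcomp (hc (tri e e) dele mid) alpha))
                             (mcomp (hc e mid alpha) alpha)"

end

theory Submission
  imports Defs
begin

text \<open>The counit laws of the comonad say that the two c-coactions of e are obtained from its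
comultiplication by applying the counit: lame = (epse \<triangleleft> e) \<circ> dele and rhoe = (e \<triangleleft> epse) \<circ> dele.
Hence e is a comonoid with counit epsc \<circ> epse, and epse is a cofunctor e \<rightarrow> c.  Corestriction
along epse turns an (e,d)-bicomodule (p, alpha, rho) into a (c,d)-bicomodule with left coaction
(epse \<triangleleft> p) \<circ> alpha, and every further condition making alpha a left comodule over the comonad
(landing in e \<triangleleft>_c p, compatibility with lame) is an instance of one identity: the
coassociativity of alpha, pushed forward along a map (f \<triangleleft> g) \<circ> dele.  Conversely, the counit
law of alpha is that of its corestriction.\<close>

lemma meq_refl: "meq p q f f"
  by (simp add: meq_def)

lemma meq_sym: "meq p q f g \<Longrightarrow> meq p q g f"
  by (simp add: meq_def)

lemma meq_trans [trans]: "meq p q f g \<Longrightarrow> meq p q g h \<Longrightarrow> meq p q f h"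
  by (simp add: meq_def)

lemma mcomp_assoc [simp]: "mcomp h (mcomp g f) = mcomp (mcomp h g) f"
  by (simp add: mcomp_def)

lemma mcomp_mid [simp]: "mcomp mid f = f" "mcomp f mid = f"
  by (simp_all add: mcomp_def mid_def)

lemma is_map_mcomp: "is_map p q f \<Longrightarrow> is_map q r g \<Longrightarrow> is_map p r (mcomp g f)"
  by (simp add: is_map_def mcomp_def)

lemma is_map_mid: "is_map p p mid"
  by (simp add: is_map_def mid_def)

lemma is_map_hc: "is_map p p' f \<Longrightarrow> is_map q q' g \<Longrightarrow> is_map (tri p q) (tri p' q') (hc p' f g)"
  unfolding is_map_def tri_def hc_def pos_def dir_def by (auto simp: PiE_iff)

lemma is_map_assoc: "is_map (tri (tri p q) r) (tri p (tri q r)) (assoc p q)"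
  unfolding is_map_def tri_def assoc_def pos_def dir_def by (auto simp: PiE_iff)

lemma is_map_lu: "is_map (tri ypoly p) p lu"
  unfolding is_map_def tri_def lu_def pos_def dir_def ypoly_def by auto

lemma is_map_ru: "is_map (tri p ypoly) p ru"
  unfolding is_map_def tri_def ru_def pos_def dir_def ypoly_def by auto

lemmas is_map_intros = is_map_mcomp is_map_hc is_map_mid is_map_lu is_map_ru is_map_assoc

lemma meq_mcomp:
  "is_map p q f \<Longrightarrow> is_map q r g \<Longrightarrow> meq p q f f' \<Longrightarrow> meq q r g g'
   \<Longrightarrow> meq p r (mcomp g f) (mcomp g' f')"
  by (simp add: is_map_def meq_def mcomp_def)

lemma hc_mcomp:
  "is_map p p' f \<Longrightarrow> is_map p' p'' f' \<Longrightarrow> is_map q q' g \<Longrightarrow> is_map q' q'' g' \<Longrightarrow>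
   meq (tri p q) (tri p'' q'') (mcomp (hc p'' f' g') (hc p' f g)) (hc p'' (mcomp f' f) (mcomp g' g))"
  unfolding is_map_def tri_def hc_def pos_def dir_def meq_def mcomp_def by (auto simp: PiE_iff)

lemma hc_cong:
  "is_map p p' f1 \<Longrightarrow> is_map q q' g1 \<Longrightarrow> meq p p' f1 f2 \<Longrightarrow> meq q q' g1 g2 \<Longrightarrow>
   meq (tri p q) (tri p' q') (hc p' f1 g1) (hc p' f2 g2)"
  unfolding is_map_def tri_def hc_def pos_def dir_def meq_def by (auto simp: PiE_iff)

lemma hc_mid: "meq (tri p q) (tri p q) (hc p mid mid) mid"
  unfolding tri_def hc_def pos_def dir_def meq_def mid_def by (auto simp: PiE_iff)

lemma assoc_natural:
  "is_map p p' f \<Longrightarrow> is_map q q' g \<Longrightarrow> is_map r r' k \<Longrightarrow>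
   meq (tri (tri p q) r) (tri p' (tri q' r'))
     (mcomp (assoc p' q') (hc (tri p' q') (hc p' f g) k)) (mcomp (hc p' f (hc q' g k)) (assoc p q))"
  unfolding is_map_def tri_def hc_def pos_def dir_def meq_def mcomp_def assoc_def
  by (auto simp: PiE_iff fun_eq_iff)

lemma hc_decompose:
  assumes "is_map p p' f" "is_map q q' g"
  shows "meq (tri p q) (tri p' q') (hc p' f g) (mcomp (hc p' mid g) (hc p' f mid))"
  using meq_sym[OF hc_mcomp[OF assms(1) is_map_mid is_map_mid assms(2)]] by simp

subsection \<open>Pushing a left coaction forward along a map\<close>

lemma left_counit_pushforward:
  assumes eps: "is_map c ypoly eps" and phi: "is_map e c phi" and alpha: "is_map p (tri e p) alpha"
  shows "meq p p (mcomp lu (mcomp (hc ypoly (mcomp eps phi) mid) alpha))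
                 (mcomp lu (mcomp (hc ypoly eps mid) (mcomp (hc c phi mid) alpha)))"
proof -
  have split: "meq (tri e p) (tri ypoly p) (hc ypoly (mcomp eps phi) mid) (mcomp (hc ypoly eps mid) (hc c phi mid))"
    using meq_sym[OF hc_mcomp[OF phi eps is_map_mid[of p] is_map_mid[of p]]] by simp
  have "meq p p (mcomp lu (mcomp (hc ypoly (mcomp eps phi) mid) alpha))
                (mcomp lu (mcomp (mcomp (hc ypoly eps mid) (hc c phi mid)) alpha))"
    by (rule meq_refl split meq_mcomp is_map_intros assms)+
  then show ?thesis by simp
qed

lemma coassoc_pushforward:
  assumes f: "is_map e x f" and g: "is_map e y g" and del: "is_map e (tri e e) del"
    and alpha: "is_map p (tri e p) alpha"
    and coassoc: "meq p (tri e (tri e p)) (mcomp (assoc e e) (mcomp (hc (tri e e) del mid) alpha))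
                                         (mcomp (hc e mid alpha) alpha)"
  shows "meq p (tri x (tri y p)) (mcomp (assoc x y) (mcomp (hc (tri x y) (mcomp (hc x f g) del) mid) alpha))
                                 (mcomp (hc x f (mcomp (hc y g mid) alpha)) alpha)"
proof -
  have split: "meq (tri e p) (tri (tri x y) p) (hc (tri x y) (mcomp (hc x f g) del) mid)
                 (mcomp (hc (tri x y) (hc x f g) mid) (hc (tri e e) del mid))"
    using meq_sym[OF hc_mcomp[OF del is_map_hc[OF f g] is_map_mid[of p] is_map_mid[of p]]] by simp
  have natural: "meq (tri (tri e e) p) (tri x (tri y p))
                   (mcomp (assoc x y) (hc (tri x y) (hc x f g) mid)) (mcomp (hc x f (hc y g mid)) (assoc e e))"
    by (rule assoc_natural[OF f g is_map_mid])
  have merge: "meq (tri e p) (tri x (tri y p)) (mcomp (hc x f (hc y g mid)) (hc e mid alpha))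
                 (hc x f (mcomp (hc y g mid) alpha))"
    using hc_mcomp[OF is_map_mid[of e] f alpha is_map_hc[OF g is_map_mid[of p]]] by simp
  note maps = is_map_intros f g del alpha
  have "meq p (tri x (tri y p)) (mcomp (assoc x y) (mcomp (hc (tri x y) (mcomp (hc x f g) del) mid) alpha))
          (mcomp (assoc x y) (mcomp (mcomp (hc (tri x y) (hc x f g) mid) (hc (tri e e) del mid)) alpha))"
    by (rule meq_refl split meq_mcomp maps)+
  also have "\<dots> = mcomp (mcomp (assoc x y) (hc (tri x y) (hc x f g) mid)) (mcomp (hc (tri e e) del mid) alpha)"
    by simp
  also have "meq p (tri x (tri y p)) \<dots> (mcomp (mcomp (hc x f (hc y g mid)) (assoc e e)) (mcomp (hc (tri e e) del mid) alpha))"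
    by (rule meq_refl natural meq_mcomp maps)+
  also have "\<dots> = mcomp (hc x f (hc y g mid)) (mcomp (assoc e e) (mcomp (hc (tri e e) del mid) alpha))"
    by simp
  also have "meq p (tri x (tri y p)) \<dots> (mcomp (hc x f (hc y g mid)) (mcomp (hc e mid alpha) alpha))"
    by (rule meq_refl coassoc meq_mcomp maps)+
  also have "\<dots> = mcomp (mcomp (hc x f (hc y g mid)) (hc e mid alpha)) alpha"
    by simp
  also have "meq p (tri x (tri y p)) \<dots> (mcomp (hc x f (mcomp (hc y g mid) alpha)) alpha)"
    by (rule meq_refl merge meq_mcomp maps)+
  finally show ?thesis .
qed

lemma hc_interchange:
  assumes "is_map p p' f" "is_map q q' g"
  shows "meq (tri p q) (tri p' q') (mcomp (hc p' f mid) (hc p mid g)) (mcomp (hc p' mid g) (hc p' f mid))"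
proof -
  have "meq (tri p q) (tri p' q') (mcomp (hc p' f mid) (hc p mid g)) (hc p' f g)"
    using hc_mcomp[OF is_map_mid assms(1) assms(2) is_map_mid] by simp
  then show ?thesis
    using hc_decompose[OF assms] by (rule meq_trans)
qed

lemma compatibility_pushforward:
  assumes phi: "is_map e c phi" and alpha: "is_map p (tri e p) alpha" and rho: "is_map p (tri p d) rho"
    and compat: "meq p (tri e (tri p d)) (mcomp (assoc e p) (mcomp (hc (tri e p) alpha mid) rho))
                                         (mcomp (hc e mid rho) alpha)"
  shows "meq p (tri c (tri p d))
           (mcomp (assoc c p) (mcomp (hc (tri c p) (mcomp (hc c phi mid) alpha) mid) rho))
           (mcomp (hc c mid rho) (mcomp (hc c phi mid) alpha))"
proof -
  note maps = is_map_intros phi alpha rho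
  have split: "meq (tri p d) (tri (tri c p) d) (hc (tri c p) (mcomp (hc c phi mid) alpha) mid)
                 (mcomp (hc (tri c p) (hc c phi mid) mid) (hc (tri e p) alpha mid))"
    using meq_sym[OF hc_mcomp[OF alpha is_map_hc[OF phi is_map_mid[of p]] is_map_mid[of d] is_map_mid[of d]]]
    by simp
  have "meq (tri (tri e p) d) (tri c (tri p d))
          (mcomp (assoc c p) (hc (tri c p) (hc c phi mid) mid)) (mcomp (hc c phi (hc p mid mid)) (assoc e p))"
    by (rule assoc_natural[OF phi is_map_mid is_map_mid])
  also have "meq (tri (tri e p) d) (tri c (tri p d)) \<dots> (mcomp (hc c phi mid) (assoc e p))"
    by (rule meq_refl hc_mid meq_mcomp hc_cong maps)+
  finally have natural: "meq (tri (tri e p) d) (tri c (tri p d))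
          (mcomp (assoc c p) (hc (tri c p) (hc c phi mid) mid)) (mcomp (hc c phi mid) (assoc e p))" .
  have "meq p (tri c (tri p d))
          (mcomp (assoc c p) (mcomp (hc (tri c p) (mcomp (hc c phi mid) alpha) mid) rho))
          (mcomp (assoc c p) (mcomp (mcomp (hc (tri c p) (hc c phi mid) mid) (hc (tri e p) alpha mid)) rho))"
    by (rule meq_refl split meq_mcomp maps)+
  also have "\<dots> = mcomp (mcomp (assoc c p) (hc (tri c p) (hc c phi mid) mid)) (mcomp (hc (tri e p) alpha mid) rho)"
    by simp
  also have "meq p (tri c (tri p d)) \<dots> (mcomp (mcomp (hc c phi mid) (assoc e p)) (mcomp (hc (tri e p) alpha mid) rho))"
    by (rule meq_refl natural meq_mcomp maps)+
  also have "\<dots> = mcomp (hc c phi mid) (mcomp (assoc e p) (mcomp (hc (tri e p) alpha mid) rho))"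
    by simp
  also have "meq p (tri c (tri p d)) \<dots> (mcomp (hc c phi mid) (mcomp (hc e mid rho) alpha))"
    by (rule meq_refl compat meq_mcomp maps)+
  also have "\<dots> = mcomp (mcomp (hc c phi mid) (hc e mid rho)) alpha"
    by simp
  also have "meq p (tri c (tri p d)) \<dots> (mcomp (mcomp (hc c mid rho) (hc c phi mid)) alpha)"
    by (rule meq_refl hc_interchange[OF phi rho] meq_mcomp maps)+
  finally show ?thesis by simp
qed

lemma map_pushforward:
  assumes phi: "is_map e c phi" and alpha: "is_map p (tri e p) alpha" and beta: "is_map q (tri e q) beta"
    and f: "is_map p q f"
    and commutes: "meq p (tri e q) (mcomp (hc e mid f) alpha) (mcomp beta f)"
  shows "meq p (tri c q) (mcomp (hc c mid f) (mcomp (hc c phi mid) alpha))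
                         (mcomp (mcomp (hc c phi mid) beta) f)"
proof -
  note maps = is_map_intros phi alpha beta f
  have "meq p (tri c q) (mcomp (mcomp (hc c mid f) (hc c phi mid)) alpha)
                        (mcomp (mcomp (hc c phi mid) (hc e mid f)) alpha)"
    by (rule meq_refl meq_sym[OF hc_interchange[OF phi f]] meq_mcomp maps)+
  also have "\<dots> = mcomp (hc c phi mid) (mcomp (hc e mid f) alpha)"
    by simp
  also have "meq p (tri c q) \<dots> (mcomp (hc c phi mid) (mcomp beta f))"
    by (rule meq_refl commutes meq_mcomp maps)+
  finally show ?thesis by simp
qed

subsection \<open>Corestriction of comodules along a comonoid homomorphism\<close>

lemma left_comodule_pushforward:
  assumes e: "comonoid e epse dele" and c: "comonoid c epsc delc"
    and hom: "comonoid_hom e epse dele c epsc delc phi"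
    and comod: "left_comodule e epse dele p alpha"
  shows "left_comodule c epsc delc p (mcomp (hc c phi mid) alpha)"
proof -
  from e have dele: "is_map e (tri e e) dele"
    unfolding comonoid_def by blast
  from c have epsc: "is_map c ypoly epsc" and delc: "is_map c (tri c c) delc"
    unfolding comonoid_def by blast+
  from hom have phi: "is_map e c phi"
    and counit: "meq e ypoly (mcomp epsc phi) epse"
    and comult: "meq e (tri c c) (mcomp delc phi) (mcomp (hc c phi phi) dele)"
    unfolding comonoid_hom_def by blast+
  from comod have alpha: "is_map p (tri e p) alpha"
    and alpha_counit: "meq p p (mcomp lu (mcomp (hc ypoly epse mid) alpha)) mid"
    and alpha_coassoc: "meq p (tri e (tri e p)) (mcomp (assoc e e) (mcomp (hc (tri e e) dele mid) alpha))
                                               (mcomp (hc e mid alpha) alpha)"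
    unfolding left_comodule_def by blast+
  note maps = is_map_intros phi alpha dele epsc delc
  have "meq p p (mcomp lu (mcomp (hc ypoly epsc mid) (mcomp (hc c phi mid) alpha)))
                (mcomp lu (mcomp (hc ypoly (mcomp epsc phi) mid) alpha))"
    by (rule meq_sym[OF left_counit_pushforward[OF epsc phi alpha]])
  also have "meq p p \<dots> (mcomp lu (mcomp (hc ypoly epse mid) alpha))"
    by (rule meq_refl counit meq_mcomp hc_cong maps)+
  also note alpha_counit
  finally have lam_counit: "meq p p (mcomp lu (mcomp (hc ypoly epsc mid) (mcomp (hc c phi mid) alpha))) mid" .
  have merge: "meq (tri e p) (tri (tri c c) p)
      (mcomp (hc (tri c c) delc mid) (hc c phi mid)) (hc (tri c c) (mcomp delc phi) mid)"
    using hc_mcomp[OF phi delc is_map_mid[of p] is_map_mid[of p]] by simp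
  have "meq p (tri c (tri c p))
          (mcomp (assoc c c) (mcomp (mcomp (hc (tri c c) delc mid) (hc c phi mid)) alpha))
          (mcomp (assoc c c) (mcomp (hc (tri c c) (mcomp delc phi) mid) alpha))"
    by (rule meq_refl merge meq_mcomp maps)+
  then have "meq p (tri c (tri c p))
          (mcomp (assoc c c) (mcomp (hc (tri c c) delc mid) (mcomp (hc c phi mid) alpha)))
          (mcomp (assoc c c) (mcomp (hc (tri c c) (mcomp delc phi) mid) alpha))"
    by simp
  also have "meq p (tri c (tri c p)) \<dots>
          (mcomp (assoc c c) (mcomp (hc (tri c c) (mcomp (hc c phi phi) dele) mid) alpha))"
    by (rule meq_refl comult meq_mcomp hc_cong maps)+
  also have "meq p (tri c (tri c p)) \<dots> (mcomp (hc c phi (mcomp (hc c phi mid) alpha)) alpha)"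
    by (rule coassoc_pushforward[OF phi phi dele alpha alpha_coassoc])
  also have "meq p (tri c (tri c p)) \<dots>
          (mcomp (mcomp (hc c mid (mcomp (hc c phi mid) alpha)) (hc c phi mid)) alpha)"
    by (rule meq_refl hc_decompose meq_mcomp maps)+
  finally have lam_coassoc: "meq p (tri c (tri c p))
          (mcomp (assoc c c) (mcomp (hc (tri c c) delc mid) (mcomp (hc c phi mid) alpha)))
          (mcomp (hc c mid (mcomp (hc c phi mid) alpha)) (mcomp (hc c phi mid) alpha))"
    by simp
  show ?thesis
    unfolding left_comodule_def
    using lam_counit lam_coassoc is_map_mcomp[OF alpha is_map_hc[OF phi is_map_mid]] by blast
qed

lemma bicomodule_pushforward:
  assumes "comonoid e epse dele" "comonoid c epsc delc" "comonoid_hom e epse dele c epsc delc phi"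
    and bicomod: "bicomodule e epse dele d epsd deld p alpha rho"
  shows "bicomodule c epsc delc d epsd deld p (mcomp (hc c phi mid) alpha) rho"
proof -
  from bicomod have left: "left_comodule e epse dele p alpha"
    and right: "right_comodule d epsd deld p rho"
    and compat: "meq p (tri e (tri p d)) (mcomp (assoc e p) (mcomp (hc (tri e p) alpha mid) rho))
                                         (mcomp (hc e mid rho) alpha)"
    unfolding bicomodule_def by blast+
  have "is_map e c phi"
    using assms(3) unfolding comonoid_hom_def by blast
  moreover have "is_map p (tri e p) alpha"
    using left unfolding left_comodule_def by blast
  moreover have "is_map p (tri p d) rho"
    using right unfolding right_comodule_def by blast
  ultimately show ?thesis
    unfolding bicomodule_def
    using left_comodule_pushforward[OF assms(1-3) left] right compatibility_pushforward compat by blast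
qed

lemma bicomodule_map_pushforward_iff:
  assumes phi: "is_map e c phi" and alpha: "is_map p (tri e p) alpha" and beta: "is_map q (tri e q) beta"
  shows "bicomodule_map e d p alpha rho q beta sigma f \<longleftrightarrow>
           bicomodule_map c d p (mcomp (hc c phi mid) alpha) rho q (mcomp (hc c phi mid) beta) sigma f
           \<and> meq p (tri e q) (mcomp (hc e mid f) alpha) (mcomp beta f)"
  unfolding bicomodule_map_def using map_pushforward[OF phi alpha beta] by blast

subsection \<open>A comonad in Cat# on a comonoid\<close>

locale comonad_in_cat_sharp =
  fixes c :: "('i,'a) poly" and epsc delc
    and e :: "('r,'s) poly" and lame rhoe epse dele
  assumes comonoid_c: "comonoid c epsc delc"
    and comonad: "comonad_on c epsc delc e lame rhoe epse dele"
begin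

lemma is_map_epsc: "is_map c ypoly epsc"
  and is_map_delc: "is_map c (tri c c) delc"
  using comonoid_c unfolding comonoid_def by blast+

lemma is_map_lame: "is_map e (tri c e) lame"
  and lame_counit: "meq e e (mcomp lu (mcomp (hc ypoly epsc mid) lame)) mid"
  and is_map_rhoe: "is_map e (tri e c) rhoe"
  and rhoe_counit: "meq e e (mcomp ru (mcomp (hc e mid epsc) rhoe)) mid"
  using comonad unfolding comonad_on_def bicomodule_def left_comodule_def right_comodule_def
  by blast+

lemma is_map_epse: "is_map e c epse"
  and epse_comult: "meq e (tri c c) (mcomp (hc c mid epse) lame) (mcomp delc epse)"
  using comonad unfolding comonad_on_def bicomodule_map_def by blast+

lemma is_map_dele: "is_map e (tri e e) dele"
  and counit_dele_eq_lame: "meq e (tri c e) (mcomp (hc c epse mid) dele) lame"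
  and counit_dele_eq_rhoe: "meq e (tri e c) (mcomp (hc e mid epse) dele) rhoe"
  and dele_coassoc: "meq e (tri e (tri e e)) (mcomp (assoc e e) (mcomp (hc (tri e e) dele mid) dele))
                                            (mcomp (hc e mid dele) dele)"
  using comonad unfolding comonad_on_def by blast+

lemmas comonad_maps = is_map_epsc is_map_delc is_map_lame is_map_rhoe is_map_epse is_map_dele

lemma comonoid_e: "comonoid e (mcomp epsc epse) dele"
proof -
  note maps = is_map_intros comonad_maps
  have "meq e e (mcomp lu (mcomp (hc ypoly (mcomp epsc epse) mid) dele))
                (mcomp lu (mcomp (hc ypoly epsc mid) (mcomp (hc c epse mid) dele)))"
    by (rule left_counit_pushforward[OF is_map_epsc is_map_epse is_map_dele])
  also have "meq e e \<dots> (mcomp lu (mcomp (hc ypoly epsc mid) lame))"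
    by (rule meq_refl counit_dele_eq_lame meq_mcomp maps)+
  also note lame_counit
  finally have left_counit: "meq e e (mcomp lu (mcomp (hc ypoly (mcomp epsc epse) mid) dele)) mid" .
  have split: "meq (tri e e) (tri e ypoly) (hc e mid (mcomp epsc epse)) (mcomp (hc e mid epsc) (hc e mid epse))"
    using meq_sym[OF hc_mcomp[OF is_map_mid[of e] is_map_mid[of e] is_map_epse is_map_epsc]] by simp
  have "meq e e (mcomp ru (mcomp (hc e mid (mcomp epsc epse)) dele))
                (mcomp ru (mcomp (mcomp (hc e mid epsc) (hc e mid epse)) dele))"
    by (rule meq_refl split meq_mcomp maps)+
  also have "\<dots> = mcomp ru (mcomp (hc e mid epsc) (mcomp (hc e mid epse) dele))"
    by simp
  also have "meq e e \<dots> (mcomp ru (mcomp (hc e mid epsc) rhoe))"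
    by (rule meq_refl counit_dele_eq_rhoe meq_mcomp maps)+
  also note rhoe_counit
  finally have right_counit: "meq e e (mcomp ru (mcomp (hc e mid (mcomp epsc epse)) dele)) mid" .
  show ?thesis
    unfolding comonoid_def
    using left_counit right_counit dele_coassoc is_map_mcomp[OF is_map_epse is_map_epsc] is_map_dele
    by blast
qed

lemma comonoid_hom_epse: "comonoid_hom e (mcomp epsc epse) dele c epsc delc epse"
proof -
  note maps = is_map_intros comonad_maps
  have "meq e (tri c c) (mcomp delc epse) (mcomp (hc c mid epse) lame)"
    by (rule meq_sym[OF epse_comult])
  also have "meq e (tri c c) \<dots> (mcomp (hc c mid epse) (mcomp (hc c epse mid) dele))"
    by (rule meq_refl meq_sym[OF counit_dele_eq_lame] meq_mcomp maps)+
  also have "\<dots> = mcomp (mcomp (hc c mid epse) (hc c epse mid)) dele"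
    by simp
  also have "meq e (tri c c) \<dots> (mcomp (hc c epse epse) dele)"
    by (rule meq_refl meq_sym[OF hc_decompose] meq_mcomp maps)+
  finally show ?thesis
    unfolding comonoid_hom_def using is_map_epse meq_refl by blast
qed

context
  fixes p :: "('k,'m) poly" and alpha
  assumes alpha: "is_map p (tri e p) alpha"
    and alpha_coassoc: "meq p (tri e (tri e p)) (mcomp (assoc e e) (mcomp (hc (tri e e) dele mid) alpha))
                                               (mcomp (hc e mid alpha) alpha)"
begin

lemma coaction_lands_in_hcomp: "lands_in_hcomp p c e rhoe p (mcomp (hc c epse mid) alpha) alpha"
proof -
  note maps = is_map_intros comonad_maps alpha
  have "meq p (tri e (tri c p)) (mcomp (assoc e c) (mcomp (hc (tri e c) rhoe mid) alpha))
          (mcomp (assoc e c) (mcomp (hc (tri e c) (mcomp (hc e mid epse) dele) mid) alpha))"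
    by (rule meq_refl meq_sym[OF counit_dele_eq_rhoe] meq_mcomp hc_cong maps)+
  also have "meq p (tri e (tri c p)) \<dots> (mcomp (hc e mid (mcomp (hc c epse mid) alpha)) alpha)"
    by (rule coassoc_pushforward[OF is_map_mid is_map_epse is_map_dele alpha alpha_coassoc])
  finally show ?thesis
    unfolding lands_in_hcomp_def .
qed

lemma coaction_left_linear:
  "meq p (tri c (tri e p)) (mcomp (assoc c e) (mcomp (hc (tri c e) lame mid) alpha))
                           (mcomp (hc c mid alpha) (mcomp (hc c epse mid) alpha))"
proof -
  note maps = is_map_intros comonad_maps alpha
  have "meq p (tri c (tri e p)) (mcomp (assoc c e) (mcomp (hc (tri c e) lame mid) alpha))
          (mcomp (assoc c e) (mcomp (hc (tri c e) (mcomp (hc c epse mid) dele) mid) alpha))"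
    by (rule meq_refl meq_sym[OF counit_dele_eq_lame] meq_mcomp hc_cong maps)+
  also have "meq p (tri c (tri e p)) \<dots> (mcomp (hc c epse (mcomp (hc e mid mid) alpha)) alpha)"
    by (rule coassoc_pushforward[OF is_map_epse is_map_mid is_map_dele alpha alpha_coassoc])
  also have "meq p (tri c (tri e p)) \<dots> (mcomp (hc c epse alpha) alpha)"
  proof -
    have unit: "meq p (tri e p) (mcomp (hc e mid mid) alpha) alpha"
      using meq_mcomp[OF alpha is_map_hc[OF is_map_mid is_map_mid] meq_refl hc_mid] by simp
    show ?thesis
      by (rule meq_refl unit meq_mcomp hc_cong maps)+
  qed
  also have "meq p (tri c (tri e p)) \<dots> (mcomp (mcomp (hc c mid alpha) (hc c epse mid)) alpha)"
    by (rule meq_refl hc_decompose meq_mcomp maps)+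
  finally show ?thesis
    by simp
qed

end

lemma bicomodule_iff_left_comonad_comodule:
  "bicomodule e (mcomp epsc epse) dele d epsd deld p alpha rho \<longleftrightarrow>
     bicomodule c epsc delc d epsd deld p (mcomp (hc c epse mid) alpha) rho
     \<and> left_comonad_comodule c d e lame rhoe epse dele p (mcomp (hc c epse mid) alpha) rho alpha"
    (is "?e_bicomod \<longleftrightarrow> ?c_bicomod \<and> ?e_comod")
proof
  assume bicomod: ?e_bicomod
  then have alpha: "is_map p (tri e p) alpha"
    and alpha_coassoc: "meq p (tri e (tri e p)) (mcomp (assoc e e) (mcomp (hc (tri e e) dele mid) alpha))
                                               (mcomp (hc e mid alpha) alpha)"
    and compat: "meq p (tri e (tri p d)) (mcomp (assoc e p) (mcomp (hc (tri e p) alpha mid) rho))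
                                         (mcomp (hc e mid rho) alpha)"
    unfolding bicomodule_def left_comodule_def by blast+
  show "?c_bicomod \<and> ?e_comod"
    unfolding left_comonad_comodule_def
    using bicomodule_pushforward[OF comonoid_e comonoid_c comonoid_hom_epse bicomod]
      alpha alpha_coassoc compat meq_refl
      coaction_lands_in_hcomp[OF alpha alpha_coassoc] coaction_left_linear[OF alpha alpha_coassoc]
    by blast
next
  assume "?c_bicomod \<and> ?e_comod"
  then have alpha: "is_map p (tri e p) alpha"
    and lam_counit: "meq p p (mcomp lu (mcomp (hc ypoly epsc mid) (mcomp (hc c epse mid) alpha))) mid"
    and "right_comodule d epsd deld p rho"
    and "meq p (tri e (tri e p)) (mcomp (assoc e e) (mcomp (hc (tri e e) dele mid) alpha))
                                 (mcomp (hc e mid alpha) alpha)"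
    and "meq p (tri e (tri p d)) (mcomp (assoc e p) (mcomp (hc (tri e p) alpha mid) rho))
                                 (mcomp (hc e mid rho) alpha)"
    unfolding bicomodule_def left_comodule_def left_comonad_comodule_def by blast+
  moreover have "meq p p (mcomp lu (mcomp (hc ypoly (mcomp epsc epse) mid) alpha)) mid"
    using meq_trans[OF left_counit_pushforward[OF is_map_epsc is_map_epse alpha] lam_counit] .
  ultimately show ?e_bicomod
    unfolding bicomodule_def left_comodule_def by blast
qed

end

theorem mainTheorem6:
  fixes c :: "('i,'a) poly" and epsc delc
    and d :: "('j,'b) poly" and epsd deld
    and e :: "('r,'s) poly" and lame rhoe epse dele
  assumes "comonoid c epsc delc"
    and "comonoid d epsd deld"
    and "comonad_on c epsc delc e lame rhoe epse dele"
  shows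
    \<comment> \<open>e is a comonoid (counit epsc o epse, comultiplication dele) and epse is a comonoid hom e \<rightarrow> c\<close>
    "comonoid e (mcomp epsc epse) dele
     \<and> comonoid_hom e (mcomp epsc epse) dele c epsc delc epse
     \<comment> \<open>objects: (e,d)-bicomodule structures on a carrier p correspond to (c,d)-bicomodule
         structures on p with a left e-comodule structure, same carrier and same right coaction\<close>
     \<and> (\<forall>(p :: ('k,'m) poly) alpha rho.
          bicomodule e (mcomp epsc epse) dele d epsd deld p alpha rho
          \<longleftrightarrow> (bicomodule c epsc delc d epsd deld p (mcomp (hc c epse mid) alpha) rho
               \<and> left_comonad_comodule c d e lame rhoe epse dele p
                    (mcomp (hc c epse mid) alpha) rho alpha))
     \<and> (\<forall>(p :: ('k,'m) poly) lam rho alpha.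
          bicomodule c epsc delc d epsd deld p lam rho
          \<and> left_comonad_comodule c d e lame rhoe epse dele p lam rho alpha
          \<longrightarrow> meq p (tri c p) lam (mcomp (hc c epse mid) alpha))
     \<comment> \<open>morphisms: the same polynomial maps on both sides\<close>
     \<and> (\<forall>(p :: ('k,'m) poly) alpha rho (q :: ('n,'o) poly) beta sigma f.
          bicomodule e (mcomp epsc epse) dele d epsd deld p alpha rho
          \<and> bicomodule e (mcomp epsc epse) dele d epsd deld q beta sigma
          \<longrightarrow> (bicomodule_map e d p alpha rho q beta sigma f
               \<longleftrightarrow> (bicomodule_map c d p (mcomp (hc c epse mid) alpha) rho
                                       q (mcomp (hc c epse mid) beta) sigma f
                    \<and> meq p (tri e q) (mcomp (hc e mid f) alpha) (mcomp beta f))))"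
proof -
  interpret comonad_in_cat_sharp c epsc delc e lame rhoe epse dele
    using assms(1,3) by unfold_locales
  have left_coaction: "is_map p (tri e p) alpha"
    if "bicomodule e (mcomp epsc epse) dele d epsd deld p alpha rho" for p :: "('x,'y) poly" and alpha rho
    using that unfolding bicomodule_def left_comodule_def by blast
  show ?thesis
    using comonoid_e comonoid_hom_epse bicomodule_iff_left_comonad_comodule
      bicomodule_map_pushforward_iff[OF is_map_epse left_coaction left_coaction]
    unfolding left_comonad_comodule_def by (blast intro: meq_sym)
qed

end
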